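(* Let $n\ge1$ and let $o_1,\dots,o_n\ge1$ be integers. For each layer $\ell=1,\dots,n$ let $H^{(\ell)}_0\in\mathbb{R}$ and $H^{(\ell)}_j:\mathbb{Z}^j\to\mathbb{R}$, $1\le j\le o_\ell$, be finitely supported kernels. For a signal $x:\mathbb{Z}\to\mathbb{R}$ define $x_0=x$ and $x_\ell=\sum_{j=0}^{o_\ell}H^{(\ell)}_j*x_{\ell-1}^j$ for $\ell=1,\dots,n$. Then $x_n$ has the form of an order-$\prod_{\ell=1}^n o_\ell$ Volterra convolution of $x$: there exist finitely supported kernels $F_k:\mathbb{Z}^k\to\mathbb{R}$, $0\le k\le\prod_{\ell=1}^n o_\ell$ ($F_0\in\mathbb{R}$), not depending on $x$, with $x_n=\sum_{k=0}^{\prod_\ell o_\ell}F_k*x^k$.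
   Context: Signals are real functions on $\mathbb{Z}$. For a kernel $H:\mathbb{Z}^n\to\mathbb{R}$ ($n\ge1$) and signals $x_1,\dots,x_n$, the order-$n$ convolution is $(H*[x_1,\dots,x_n])(t)=\sum_{(\tau_1,\dots,\tau_n)\in\mathbb{Z}^n}H(\tau_1,\dots,\tau_n)\prod_{i=1}^n x_i(t-\tau_i)$, and $H*x^n$ denotes $H*[x,\dots,x]$ ($n$ copies). For $n=0$ the kernel is a real number $H_0$ and $H_0*x^0$ is the constant signal with value $H_0$. *)

theory Defs
  imports Complex_Main
begin

type_synonym signal = "int \<Rightarrow> real"

text \<open>A kernel of order j is a function on Z^j, represented as a function on int lists;
only its values on lists of length j matter. The order-0 kernel H_0 is the value at [].\<close>
type_synonym kernel = "int list \<Rightarrow> real"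

definition kernel_support :: "kernel \<Rightarrow> nat \<Rightarrow> int list set" where
  "kernel_support H j = {\<tau>. length \<tau> = j \<and> H \<tau> \<noteq> 0}"

definition fin_supp :: "kernel \<Rightarrow> nat \<Rightarrow> bool" where
  "fin_supp H j \<longleftrightarrow> finite (kernel_support H j)"

text \<open>Order-j convolution H * x^j; for finitely supported H the defining sum over Z^j
has only finitely many nonzero terms, so it is the finite sum over the support.\<close>
definition vconv :: "kernel \<Rightarrow> nat \<Rightarrow> signal \<Rightarrow> signal" where
  "vconv H j x t = (\<Sum>\<tau>\<in>kernel_support H j. H \<tau> * (\<Prod>i<j. x (t - \<tau> ! i)))"

fun layer :: "(nat \<Rightarrow> nat \<Rightarrow> kernel) \<Rightarrow> (nat \<Rightarrow> nat) \<Rightarrow> nat \<Rightarrow> signal \<Rightarrow> signal" where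
  "layer H ord 0 x = x"
| "layer H ord (Suc l) x = (\<lambda>t. \<Sum>j\<le>ord (Suc l). vconv (H (Suc l) j) j (layer H ord l x) t)"

end

theory Submission
  imports Defs
begin

text \<open>Call an operator on signals a delay polynomial of degree at most D if its value at time t
  is a fixed real polynomial of degree at most D in finitely many delayed samples x (t - s);
  it is encoded by a list of terms (c, \<tau>) standing for c * x (t - \<tau>!0) * ... * x (t - \<tau>!(k-1)).
  The identity has degree 1, and delay polynomials are closed under sums, time shifts and
  products, where degrees add. An order-j convolution is a finite sum of shifted j-fold
  products, so a layer of order o maps degree D to degree o * D, and the n-th layer has degree
  at most the product of the orders. Collecting the coefficients of equal delay tuples turns a
  delay polynomial into finitely supported Volterra kernels.\<close>

type_synonym delay_terms = "(real \<times> int list) list"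

definition delay_monomial :: "int list \<Rightarrow> signal \<Rightarrow> signal" where
  "delay_monomial \<tau> x t = (\<Prod>s\<leftarrow>\<tau>. x (t - s))"

lemma delay_monomial_eq_prod: "delay_monomial \<tau> x t = (\<Prod>i<length \<tau>. x (t - \<tau> ! i))"
  unfolding delay_monomial_def
  by (induction \<tau>) (simp_all add: prod.lessThan_Suc_shift del: prod.lessThan_Suc)

definition eval_delay_poly :: "delay_terms \<Rightarrow> signal \<Rightarrow> signal" where
  "eval_delay_poly ms x t = (\<Sum>(c, \<tau>)\<leftarrow>ms. c * delay_monomial \<tau> x t)"

definition delay_poly :: "nat \<Rightarrow> (signal \<Rightarrow> signal) \<Rightarrow> bool" where
  "delay_poly D P \<longleftrightarrow>
     (\<exists>ms. (\<forall>(c, \<tau>)\<in>set ms. length \<tau> \<le> D) \<and> P = eval_delay_poly ms)"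

lemma delay_polyI:
  assumes "\<forall>(c, \<tau>)\<in>set ms. length \<tau> \<le> D" and "P = eval_delay_poly ms"
  shows "delay_poly D P"
  using assms unfolding delay_poly_def by blast

lemma delay_polyE:
  assumes "delay_poly D P"
  obtains ms where "\<forall>(c, \<tau>)\<in>set ms. length \<tau> \<le> D" and "P = eval_delay_poly ms"
  using assms unfolding delay_poly_def by blast

lemma delay_poly_mono: "delay_poly D P \<Longrightarrow> D \<le> E \<Longrightarrow> delay_poly E P"
  unfolding delay_poly_def by fastforce

lemma delay_poly_const: "delay_poly D (\<lambda>x t. c)"
  by (rule delay_polyI[of "[(c, [])]"])
     (auto simp: eval_delay_poly_def delay_monomial_def fun_eq_iff)

lemma delay_poly_id: "delay_poly 1 (\<lambda>x. x)"
  by (rule delay_polyI[of "[(1, [0])]"])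
     (auto simp: eval_delay_poly_def delay_monomial_def fun_eq_iff)

lemma delay_poly_add:
  assumes "delay_poly D P" and "delay_poly D Q"
  shows "delay_poly D (\<lambda>x t. P x t + Q x t)"
proof -
  obtain ms where "\<forall>(c, \<tau>)\<in>set ms. length \<tau> \<le> D" "P = eval_delay_poly ms"
    using assms(1) by (rule delay_polyE)
  moreover obtain ns where "\<forall>(c, \<tau>)\<in>set ns. length \<tau> \<le> D" "Q = eval_delay_poly ns"
    using assms(2) by (rule delay_polyE)
  ultimately show ?thesis
    by (intro delay_polyI[of "ms @ ns"]) (auto simp: eval_delay_poly_def fun_eq_iff)
qed

definition delay_poly_times :: "delay_terms \<Rightarrow> delay_terms \<Rightarrow> delay_terms" where
  "delay_poly_times ms ns = [(c * d, \<sigma> @ \<tau>). (c, \<sigma>) \<leftarrow> ms, (d, \<tau>) \<leftarrow> ns]"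

lemma eval_delay_poly_times:
  "eval_delay_poly (delay_poly_times ms ns) x t = eval_delay_poly ms x t * eval_delay_poly ns x t"
proof (induction ms)
  case Nil
  then show ?case by (simp add: delay_poly_times_def eval_delay_poly_def)
next
  case (Cons m ms)
  obtain c \<sigma> where m: "m = (c, \<sigma>)" by fastforce
  have "eval_delay_poly (delay_poly_times (m # ms) ns) x t =
      (\<Sum>(d, \<tau>)\<leftarrow>ns. c * d * delay_monomial (\<sigma> @ \<tau>) x t)
      + eval_delay_poly (delay_poly_times ms ns) x t"
    by (simp add: m delay_poly_times_def eval_delay_poly_def split_def o_def)
  also have "(\<Sum>(d, \<tau>)\<leftarrow>ns. c * d * delay_monomial (\<sigma> @ \<tau>) x t) =
      c * delay_monomial \<sigma> x t * eval_delay_poly ns x t"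
    by (simp add: eval_delay_poly_def delay_monomial_def split_def sum_list_const_mult[symmetric]
        mult_ac)
  finally show ?case
    using Cons by (simp add: m eval_delay_poly_def algebra_simps)
qed

lemma delay_poly_mult:
  assumes "delay_poly D P" and "delay_poly E Q"
  shows "delay_poly (D + E) (\<lambda>x t. P x t * Q x t)"
proof -
  obtain ms where ms: "\<forall>(c, \<tau>)\<in>set ms. length \<tau> \<le> D" "P = eval_delay_poly ms"
    using assms(1) by (rule delay_polyE)
  obtain ns where ns: "\<forall>(c, \<tau>)\<in>set ns. length \<tau> \<le> E" "Q = eval_delay_poly ns"
    using assms(2) by (rule delay_polyE)
  show ?thesis
  proof (rule delay_polyI[of "delay_poly_times ms ns"])
    show "\<forall>(c, \<tau>)\<in>set (delay_poly_times ms ns). length \<tau> \<le> D + E"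
      using ms(1) ns(1) by (fastforce simp: delay_poly_times_def intro: add_mono)
    show "(\<lambda>x t. P x t * Q x t) = eval_delay_poly (delay_poly_times ms ns)"
      by (simp add: ms(2) ns(2) eval_delay_poly_times fun_eq_iff)
  qed
qed

lemma delay_poly_shift:
  assumes "delay_poly D P"
  shows "delay_poly D (\<lambda>x t. P x (t - s))"
proof -
  obtain ms where ms: "\<forall>(c, \<tau>)\<in>set ms. length \<tau> \<le> D" "P = eval_delay_poly ms"
    using assms by (rule delay_polyE)
  let ?shifted = "[(c, map (\<lambda>u. u + s) \<tau>). (c, \<tau>) \<leftarrow> ms]"
  show ?thesis
  proof (rule delay_polyI[of ?shifted])
    show "\<forall>(c, \<tau>)\<in>set ?shifted. length \<tau> \<le> D"
      using ms(1) by auto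
    show "(\<lambda>x t. P x (t - s)) = eval_delay_poly ?shifted"
      by (simp add: ms(2) eval_delay_poly_def delay_monomial_def fun_eq_iff split_def o_def
          algebra_simps)
  qed
qed

lemma delay_poly_sum:
  assumes "finite A" and "\<And>a. a \<in> A \<Longrightarrow> delay_poly D (f a)"
  shows "delay_poly D (\<lambda>x t. \<Sum>a\<in>A. f a x t)"
  using assms
proof (induction A rule: finite_induct)
  case empty
  then show ?case using delay_poly_const[of D 0] by simp
next
  case (insert a A)
  then show ?case using delay_poly_add[of D "f a" "\<lambda>x t. \<Sum>a\<in>A. f a x t"] by simp
qed

lemma delay_poly_prod:
  assumes "\<And>i. i < j \<Longrightarrow> delay_poly D (f i)"
  shows "delay_poly (j * D) (\<lambda>x t. \<Prod>i<j. f i x t)"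
  using assms
proof (induction j)
  case 0
  then show ?case using delay_poly_const[of 0 1] by simp
next
  case (Suc j)
  then show ?case
    using delay_poly_mult[of "j * D" "\<lambda>x t. \<Prod>i<j. f i x t" D "f j"] by (simp add: add.commute)
qed

lemma delay_poly_vconv:
  assumes "delay_poly D P" and "fin_supp H j"
  shows "delay_poly (j * D) (\<lambda>x. vconv H j (P x))"
proof -
  have "delay_poly (j * D) (\<lambda>x t. H \<tau> * (\<Prod>i<j. P x (t - \<tau> ! i)))" for \<tau>
    using delay_poly_mult[OF delay_poly_const[of 0] delay_poly_prod[OF delay_poly_shift[OF assms(1)]]]
    by simp
  then have "delay_poly (j * D)
      (\<lambda>x t. \<Sum>\<tau>\<in>kernel_support H j. H \<tau> * (\<Prod>i<j. P x (t - \<tau> ! i)))"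
    using assms(2) by (intro delay_poly_sum) (simp_all add: fin_supp_def)
  then show ?thesis
    by (simp add: vconv_def[abs_def])
qed

lemma fin_supp_0: "fin_supp H 0"
proof -
  have "kernel_support H 0 \<subseteq> {[]}" by (auto simp: kernel_support_def)
  then show ?thesis unfolding fin_supp_def by (rule finite_subset) simp
qed

lemma delay_poly_layer:
  assumes "\<forall>l\<in>{1..n}. \<forall>j\<in>{1..ord l}. fin_supp (H l j) j" and "l \<le> n"
  shows "delay_poly (\<Prod>i=1..l. ord i) (layer H ord l)"
  using assms(2)
proof (induction l)
  case 0
  then show ?case using delay_poly_id by simp
next
  case (Suc l)
  have "delay_poly (ord (Suc l) * (\<Prod>i=1..l. ord i)) (\<lambda>x. vconv (H (Suc l) j) j (layer H ord l x))"
    if "j \<le> ord (Suc l)" for j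
  proof (rule delay_poly_mono)
    have "fin_supp (H (Suc l) j) j"
      using assms(1) Suc.prems that fin_supp_0 by (cases j) auto
    then show "delay_poly (j * (\<Prod>i=1..l. ord i)) (\<lambda>x. vconv (H (Suc l) j) j (layer H ord l x))"
      using Suc by (intro delay_poly_vconv) auto
  qed (use that in simp)
  then have "delay_poly (ord (Suc l) * (\<Prod>i=1..l. ord i))
      (\<lambda>x t. \<Sum>j\<le>ord (Suc l). vconv (H (Suc l) j) j (layer H ord l x) t)"
    by (intro delay_poly_sum) auto
  moreover have "layer H ord (Suc l) =
      (\<lambda>x t. \<Sum>j\<le>ord (Suc l). vconv (H (Suc l) j) j (layer H ord l x) t)"
    by (simp add: fun_eq_iff)
  ultimately show ?case
    by (simp add: prod.nat_ivl_Suc' mult.commute)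
qed

definition coeff_kernel :: "delay_terms \<Rightarrow> kernel" where
  "coeff_kernel ms \<tau> = (\<Sum>(c, \<sigma>)\<leftarrow>ms. if \<sigma> = \<tau> then c else 0)"

lemma kernel_support_coeff_kernel:
  "kernel_support (coeff_kernel ms) k \<subseteq> {\<tau> \<in> snd ` set ms. length \<tau> = k}"
proof
  fix \<tau> assume \<tau>: "\<tau> \<in> kernel_support (coeff_kernel ms) k"
  then have "(\<Sum>(c, \<sigma>)\<leftarrow>ms. if \<sigma> = \<tau> then c else 0) \<noteq> 0"
    by (simp add: kernel_support_def coeff_kernel_def)
  then have "\<tau> \<in> snd ` set ms"
    by (induction ms) (auto split: if_splits)
  then show "\<tau> \<in> {\<tau> \<in> snd ` set ms. length \<tau> = k}"
    using \<tau> by (simp add: kernel_support_def)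
qed

lemma fin_supp_coeff_kernel: "fin_supp (coeff_kernel ms) k"
  unfolding fin_supp_def by (rule finite_subset[OF kernel_support_coeff_kernel]) simp

lemma sum_sum_list_if_eq:
  fixes f :: "'a \<Rightarrow> 'c::comm_monoid_add"
  assumes "finite S"
  shows "(\<Sum>s\<in>S. \<Sum>p\<leftarrow>xs. if g p = s then f p else 0) = (\<Sum>p\<leftarrow>xs. if g p \<in> S then f p else 0)"
  by (induction xs) (simp_all add: sum.distrib sum.delta'[OF assms])

lemma vconv_coeff_kernel:
  "vconv (coeff_kernel ms) k x t =
     (\<Sum>(c, \<tau>)\<leftarrow>ms. if length \<tau> = k then c * delay_monomial \<tau> x t else 0)"
proof -
  define S where "S = {\<tau> \<in> snd ` set ms. length \<tau> = k}"
  have "finite S" by (simp add: S_def)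
  have "vconv (coeff_kernel ms) k x t = (\<Sum>\<tau>\<in>S. coeff_kernel ms \<tau> * delay_monomial \<tau> x t)"
    unfolding vconv_def
    using kernel_support_coeff_kernel[of ms k]
    by (intro sum.mono_neutral_cong_left[OF \<open>finite S\<close>])
       (auto simp: S_def kernel_support_def delay_monomial_eq_prod)
  also have "\<dots> = (\<Sum>\<tau>\<in>S. \<Sum>(c, \<sigma>)\<leftarrow>ms. if \<sigma> = \<tau> then c * delay_monomial \<sigma> x t else 0)"
    by (auto simp: coeff_kernel_def sum_list_mult_const[symmetric] split_def
        intro!: sum.cong arg_cong[where f = sum_list] map_cong)
  also have "\<dots> = (\<Sum>(c, \<sigma>)\<leftarrow>ms. if \<sigma> \<in> S then c * delay_monomial \<sigma> x t else 0)"
    using sum_sum_list_if_eq[OF \<open>finite S\<close>, of snd] by (simp add: split_def)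
  also have "\<dots> = (\<Sum>(c, \<tau>)\<leftarrow>ms. if length \<tau> = k then c * delay_monomial \<tau> x t else 0)"
    by (rule arg_cong[where f = sum_list], rule map_cong) (force simp: S_def)+
  finally show ?thesis .
qed

lemma eval_delay_poly_by_degree:
  assumes "\<forall>(c, \<tau>)\<in>set ms. length \<tau> \<le> D"
  shows "eval_delay_poly ms x t =
    (\<Sum>k\<le>D. \<Sum>(c, \<tau>)\<leftarrow>ms. if length \<tau> = k then c * delay_monomial \<tau> x t else 0)"
  using sum_sum_list_if_eq[of "{..D}" "\<lambda>p. length (snd p)" "\<lambda>p. fst p * delay_monomial (snd p) x t" ms]
    assms
  by (auto simp: eval_delay_poly_def split_def intro!: arg_cong[where f = sum_list] map_cong)

lemma delay_poly_imp_volterra: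
  assumes "delay_poly D P"
  shows "\<exists>F :: nat \<Rightarrow> kernel. (\<forall>k\<le>D. fin_supp (F k) k) \<and>
           (\<forall>x. P x = (\<lambda>t. \<Sum>k\<le>D. vconv (F k) k x t))"
proof -
  obtain ms where "\<forall>(c, \<tau>)\<in>set ms. length \<tau> \<le> D" "P = eval_delay_poly ms"
    using assms by (rule delay_polyE)
  \<comment> \<open>One kernel serves every order k: vconv at order k only reads it on lists of length k.\<close>
  then show ?thesis
    by (intro exI[of _ "\<lambda>_. coeff_kernel ms"])
       (simp add: fin_supp_coeff_kernel vconv_coeff_kernel eval_delay_poly_by_degree fun_eq_iff)
qed

theorem lemma16:
  fixes n :: nat and ord :: "nat \<Rightarrow> nat" and H :: "nat \<Rightarrow> nat \<Rightarrow> kernel"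
  assumes "n \<ge> 1"
    and "\<forall>l\<in>{1..n}. ord l \<ge> 1"
    and "\<forall>l\<in>{1..n}. \<forall>j\<in>{1..ord l}. fin_supp (H l j) j"
  shows "\<exists>F :: nat \<Rightarrow> kernel.
           (\<forall>k\<le>(\<Prod>l=1..n. ord l). fin_supp (F k) k) \<and>
           (\<forall>x. layer H ord n x = (\<lambda>t. \<Sum>k\<le>(\<Prod>l=1..n. ord l). vconv (F k) k x t))"
  using delay_poly_layer[OF assms(3) order_refl] by (rule delay_poly_imp_volterra)

end
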